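(* Let $x=\sum_{n\in F}\alpha_ne_n$ be an extreme point of $B_J$ and let $\{I_n\}_{n\in F}$ be a family of intervals of $\mathbb N$. If $\bigcup_{n\in\mathrm{supp}(x)}I_n$ is not an interval of $\mathbb N$, then $x^*=\sum_{n\in F}\alpha_nI_n^*$ is not an extreme point of $B_{J^*}$.
   Context: For a real sequence $x=(x(n))_{n\in\mathbb N}$ let $\|x\|_J=\sup\bigl(\sum_{i=1}^n|\sum_{k\in I_i}x(k)|^2\bigr)^{1/2}$ over all $n$ and all families of pairwise disjoint intervals $I_1,\dots,I_n$ of $\mathbb N$ (intervals: nonempty sets of consecutive positive integers, possibly infinite). $J=\{x:\|x\|_J<\infty\}$ with unit vector basis $(e_n)$ and closed unit ball $B_J$; $J^*$ is its dual with closed unit ball $B_{J^*}$. $\mathrm{supp}(x)=\{n:x(n)\ne0\}$. For an interval $I$, $I^*\in J^*$ is $I^*(x)=\sum_{n\in I}x(n)$. A family of intervals $\{I_i\}_{i\in F}$: $F=\{1,\dots,k\}$ or $F=\mathbb N$, each $I_i$ an interval, $\max I_i<\min I_{i+1}$ whenever $i+1\in F$; $\sum_{i\in F}\alpha_iI_i^*$ denotes the functional $x\mapsto\sum_{i\in F}\alpha_iI_i^*(x)$ (here $\sum\alpha_i^2=1$, so this is a functional of norm at most $1$). *)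

theory Defs
  imports "HOL-Analysis.Analysis"
begin

text \<open>James space J. The index set N is modelled by the type nat (first index 0).\<close>

definition nat_interval :: "nat set \<Rightarrow> bool" where
  "nat_interval I \<longleftrightarrow> I \<noteq> {} \<and> (\<forall>a\<in>I. \<forall>c\<in>I. \<forall>b. a \<le> b \<and> b \<le> c \<longrightarrow> b \<in> I)"

definition isum :: "(nat \<Rightarrow> real) \<Rightarrow> nat set \<Rightarrow> real" where
  "isum x I = (if finite I then (\<Sum>k\<in>I. x k) else lim (\<lambda>n. \<Sum>k\<in>I \<inter> {..<n}. x k))"

definition jnorm :: "(nat \<Rightarrow> real) \<Rightarrow> ereal" where
  "jnorm x = (SUP S \<in> {S. finite S \<and> (\<forall>I\<in>S. nat_interval I) \<and> disjoint S}.
                 ereal (sqrt (\<Sum>I\<in>S. (isum x I)\<^sup>2)))"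

definition James :: "(nat \<Rightarrow> real) set" where
  "James = {x. jnorm x < \<infinity>}"

definition ball_J :: "(nat \<Rightarrow> real) set" where
  "ball_J = {x. jnorm x \<le> 1}"

text \<open>Functionals are represented as functions on all sequences which vanish off J,
  so that equality of functionals is equality of these functions.\<close>
definition ball_Jdual :: "((nat \<Rightarrow> real) \<Rightarrow> real) set" where
  "ball_Jdual = {f. (\<forall>x. x \<notin> James \<longrightarrow> f x = 0)
      \<and> (\<forall>x\<in>James. \<forall>y\<in>James. f (\<lambda>n. x n + y n) = f x + f y)
      \<and> (\<forall>c. \<forall>x\<in>James. f (\<lambda>n. c * x n) = c * f x)
      \<and> (\<forall>x\<in>James. ereal \<bar>f x\<bar> \<le> jnorm x)}"

definition extreme_pt :: "('a \<Rightarrow> real) set \<Rightarrow> ('a \<Rightarrow> real) \<Rightarrow> bool" where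
  "extreme_pt B x \<longleftrightarrow> x \<in> B \<and>
     (\<forall>y\<in>B. \<forall>z\<in>B. \<forall>t::real. 0 < t \<and> t < 1 \<and> x = (\<lambda>n. t * y n + (1 - t) * z n) \<longrightarrow> y = z)"

definition interval_functional ::
    "nat set \<Rightarrow> (nat \<Rightarrow> real) \<Rightarrow> (nat \<Rightarrow> nat set) \<Rightarrow> (nat \<Rightarrow> real) \<Rightarrow> real" where
  "interval_functional F \<alpha> I y =
     (if y \<in> James then
        (if finite F then (\<Sum>n\<in>F. \<alpha> n * isum y (I n)) else (\<Sum>n. \<alpha> n * isum y (I n)))
      else 0)"

definition supp :: "(nat \<Rightarrow> real) \<Rightarrow> nat set" where
  "supp x = {n. x n \<noteq> 0}"

end

theory Submission
  imports Defs
begin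

(*
  For a \<le> p \<le> b let C be the operator that moves the sum of the coordinates on the block
  {a..b} to position p and zeroes the rest of the block. Summing C y over an interval K is
  summing y over K \<union> {a..b} or over K - {a..b}, according as p \<in> K or not; these sets form again
  a disjoint family of intervals, so C does not increase the J-norm, and neither does its
  transpose increase the dual norm.

  If x is an extreme point of B_J and x_n, x_m are consecutive nonzero coordinates, then
  x is the convex combination of the two collapses of {n..m} onto n and onto m, unless
  x_n x_m < 0. If the union of the I_k over supp x has a hole, the hole lies strictly between
  P = max I_n and Q = min I_m for two consecutive indices n < m of supp x, and no I_k with
  k in supp x meets {P+1..Q-1}. Composing x^* with the collapses of {P..Q-1} onto P and of
  {P+1..Q} onto Q gives the functionals x^* + \<alpha>_n G and x^* + \<alpha>_m G in B_J*, where G sums the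
  coordinates in {P+1..Q-1}; since \<alpha>_n \<alpha>_m < 0, x^* is a proper convex combination of them.
*)

section \<open>Intervals and the James norm\<close>

abbreviation interval_family :: "nat set set \<Rightarrow> bool" where
  "interval_family S \<equiv> finite S \<and> (\<forall>K\<in>S. nat_interval K) \<and> disjoint S"

lemma jnorm_ge:
  assumes "interval_family S"
  shows "ereal (sqrt (\<Sum>K\<in>S. (isum y K)\<^sup>2)) \<le> jnorm y"
  unfolding jnorm_def using assms by (intro SUP_upper) auto

lemma jnorm_le:
  assumes "\<And>S. interval_family S \<Longrightarrow> ereal (sqrt (\<Sum>K\<in>S. (isum y K)\<^sup>2)) \<le> B"
  shows "jnorm y \<le> B"
  unfolding jnorm_def using assms by (intro SUP_least) auto

lemma jnorm_nonneg: "0 \<le> jnorm y"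
  using jnorm_ge[of "{}" y] by (simp add: zero_ereal_def)

lemma James_jnormE:
  assumes "y \<in> James"
  obtains M where "jnorm y = ereal M"
  using assms jnorm_nonneg[of y] unfolding James_def by (cases "jnorm y") auto

lemma James_sum_squares_le:
  assumes "jnorm y = ereal M" "interval_family S"
  shows "(\<Sum>K\<in>S. (isum y K)\<^sup>2) \<le> M\<^sup>2"
proof -
  have "sqrt (\<Sum>K\<in>S. (isum y K)\<^sup>2) \<le> M"
    using jnorm_ge[OF assms(2), of y] assms(1) by simp
  moreover have "0 \<le> (\<Sum>K\<in>S. (isum y K)\<^sup>2)" by (simp add: sum_nonneg)
  ultimately show ?thesis using power_mono[of "sqrt (\<Sum>K\<in>S. (isum y K)\<^sup>2)" M 2] by simp
qed

lemma James_if_jnorm_le: "jnorm y \<le> ereal B \<Longrightarrow> y \<in> James"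
  unfolding James_def by (auto intro: le_less_trans)

lemma nat_intervalI:
  assumes "K \<noteq> {}" "\<And>a b c. a \<in> K \<Longrightarrow> c \<in> K \<Longrightarrow> a \<le> b \<Longrightarrow> b \<le> c \<Longrightarrow> b \<in> K"
  shows "nat_interval K"
  using assms unfolding nat_interval_def by blast

lemma nat_intervalD:
  assumes "nat_interval K" "a \<in> K" "c \<in> K" "a \<le> b" "b \<le> c"
  shows "b \<in> K"
  using assms unfolding nat_interval_def by blast

lemma nat_interval_atLeastLessThan: "m < n \<Longrightarrow> nat_interval {m..<n}"
  unfolding nat_interval_def by auto

lemma nat_interval_Un:
  assumes "nat_interval A" "nat_interval B" "A \<inter> B \<noteq> {}"
  shows "nat_interval (A \<union> B)"
proof (rule nat_intervalI)
  obtain p where p: "p \<in> A" "p \<in> B" using assms(3) by blast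
  show "A \<union> B \<noteq> {}" using p by blast
  fix a b c assume a: "a \<in> A \<union> B" and c: "c \<in> A \<union> B" and "a \<le> b" "b \<le> c"
  show "b \<in> A \<union> B"
  proof (cases "b \<le> p")
    case True
    then show ?thesis
      using a nat_intervalD[OF assms(1) _ p(1) \<open>a \<le> b\<close>] nat_intervalD[OF assms(2) _ p(2) \<open>a \<le> b\<close>]
      by blast
  next
    case False
    then have "p \<le> b" by simp
    then show ?thesis
      using c nat_intervalD[OF assms(1) p(1) _ _ \<open>b \<le> c\<close>] nat_intervalD[OF assms(2) p(2) _ _ \<open>b \<le> c\<close>]
      by blast
  qed
qed

lemma nat_interval_side:
  assumes "nat_interval K" "b \<notin> K" "e \<in> K" "e' \<in> K" "e < b"
  shows "e' < b"
proof (rule ccontr)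
  assume "\<not> e' < b"
  then have "b \<in> K" using nat_intervalD[OF assms(1,3,4)] assms(5) by simp
  with assms(2) show False by simp
qed

lemma nat_interval_infinite:
  assumes "nat_interval K" "infinite K"
  obtains a where "K = {a..}"
proof
  define a where "a = (LEAST k. k \<in> K)"
  have "\<exists>k. k \<in> K" using assms(1) unfolding nat_interval_def by blast
  then have aK: "a \<in> K" unfolding a_def by (rule LeastI_ex)
  show "K = {a..}"
  proof
    show "K \<subseteq> {a..}" unfolding a_def by (auto intro: Least_le)
    show "{a..} \<subseteq> K"
    proof
      fix k assume "k \<in> {a..}"
      obtain c where "c \<in> K" "k \<le> c" using assms(2) infinite_nat_iff_unbounded_le by blast
      then show "k \<in> K" using nat_intervalD[OF assms(1) aK] \<open>k \<in> {a..}\<close> by simp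
    qed
  qed
qed

lemma eventually_Int_lessThan_eq:
  fixes A :: "nat set"
  assumes "finite A"
  shows "eventually (\<lambda>N. A \<inter> {..<N} = A) sequentially"
proof -
  obtain M where "A \<subseteq> {..<M}" using assms finite_nat_bounded by blast
  then show ?thesis unfolding eventually_sequentially by (intro exI[of _ M]) auto
qed

lemma isum_eventually_cong:
  assumes "finite A \<longleftrightarrow> finite B"
    and "eventually (\<lambda>N. (\<Sum>k\<in>A \<inter> {..<N}. f k) = (\<Sum>k\<in>B \<inter> {..<N}. g k)) sequentially"
  shows "isum f A = isum g B"
proof (cases "finite A")
  case True
  with assms(1) have "finite B" by simp
  have "eventually (\<lambda>N. isum f A = isum g B) sequentially"
    using eventually_Int_lessThan_eq[OF True] eventually_Int_lessThan_eq[OF \<open>finite B\<close>] assms(2)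
    by eventually_elim (simp add: isum_def True \<open>finite B\<close>)
  then show ?thesis by simp
next
  case False
  have "(\<lambda>N. \<Sum>k\<in>A \<inter> {..<N}. f k) \<longlonglongrightarrow> L \<longleftrightarrow> (\<lambda>N. \<Sum>k\<in>B \<inter> {..<N}. g k) \<longlonglongrightarrow> L" for L
    using assms(2) by (rule tendsto_cong)
  then show ?thesis using False assms(1) unfolding isum_def lim_def by simp
qed

lemma isum_finite_support:
  assumes "finite D" "\<And>k. k \<notin> D \<Longrightarrow> w k = 0"
  shows "isum w K = (\<Sum>k\<in>K \<inter> D. w k)"
proof -
  have trunc: "(\<Sum>k\<in>T. w k) = (\<Sum>k\<in>K \<inter> D. w k)" if "finite T" "K \<inter> D \<subseteq> T" "T \<subseteq> K" for T
    using that assms(2) by (intro sum.mono_neutral_right) auto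
  have "eventually (\<lambda>N. (\<Sum>k\<in>K \<inter> {..<N}. w k) = (\<Sum>k\<in>K \<inter> D. w k)) sequentially"
    using eventually_Int_lessThan_eq[OF assms(1)] by eventually_elim (intro trunc; blast)
  then show ?thesis
    using trunc[of K] unfolding isum_def by (auto intro: limI tendsto_eventually)
qed

lemma tendsto_sum_atLeast_Int_lessThan:
  fixes y :: "nat \<Rightarrow> real"
  assumes "summable y"
  shows "(\<lambda>N. \<Sum>k\<in>{a..} \<inter> {..<N}. y k) \<longlonglongrightarrow> suminf y - (\<Sum>k<a. y k)"
proof (rule Lim_transform_eventually)
  show "(\<lambda>N. (\<Sum>k<N. y k) - (\<Sum>k<a. y k)) \<longlonglongrightarrow> suminf y - (\<Sum>k<a. y k)"
    using summable_LIMSEQ[OF assms] by (intro tendsto_diff) auto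
  have "(\<Sum>k<N. y k) - (\<Sum>k<a. y k) = (\<Sum>k\<in>{a..} \<inter> {..<N}. y k)" if "a \<le> N" for N
  proof -
    have "{..<N} = {..<a} \<union> {a..} \<inter> {..<N}" using that by auto
    moreover have "(\<Sum>k\<in>{..<a} \<union> {a..} \<inter> {..<N}. y k) = (\<Sum>k<a. y k) + (\<Sum>k\<in>{a..} \<inter> {..<N}. y k)"
      by (rule sum.union_disjoint) auto
    ultimately show ?thesis by simp
  qed
  then show "eventually (\<lambda>N. (\<Sum>k<N. y k) - (\<Sum>k<a. y k) = (\<Sum>k\<in>{a..} \<inter> {..<N}. y k)) sequentially"
    unfolding eventually_sequentially by blast
qed

lemma isum_tendsto:
  assumes "summable y" "nat_interval K"
  shows "(\<lambda>N. \<Sum>k\<in>K \<inter> {..<N}. y k) \<longlonglongrightarrow> isum y K"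
proof (cases "finite K")
  case True
  have "eventually (\<lambda>N. (\<Sum>k\<in>K \<inter> {..<N}. y k) = isum y K) sequentially"
    using eventually_Int_lessThan_eq[OF True] by eventually_elim (simp add: isum_def True)
  then show ?thesis by (rule tendsto_eventually)
next
  case False
  then obtain a where "K = {a..}" using nat_interval_infinite assms(2) by blast
  then have "convergent (\<lambda>N. \<Sum>k\<in>K \<inter> {..<N}. y k)"
    using tendsto_sum_atLeast_Int_lessThan[OF assms(1)] unfolding convergent_def by blast
  then show ?thesis using False by (simp add: isum_def convergent_LIMSEQ_iff)
qed

lemma isum_add:
  assumes "summable y" "summable z" "nat_interval K"
  shows "isum (\<lambda>n. y n + z n) K = isum y K + isum z K"
  using isum_tendsto[OF summable_add[OF assms(1,2)] assms(3)]
    tendsto_add[OF isum_tendsto[OF assms(1,3)] isum_tendsto[OF assms(2,3)]]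
  by (simp add: sum.distrib LIMSEQ_unique)

lemma isum_scale:
  assumes "summable y" "nat_interval K"
  shows "isum (\<lambda>n. c * y n) K = c * isum y K"
proof (rule LIMSEQ_unique[OF isum_tendsto[OF summable_mult[OF assms(1)] assms(2)]])
  show "(\<lambda>N. \<Sum>k\<in>K \<inter> {..<N}. c * y k) \<longlonglongrightarrow> c * isum y K"
    using tendsto_mult_left[OF isum_tendsto[OF assms], of c] by (simp add: sum_distrib_left)
qed

lemma disjoint_blocks_beyond:
  fixes y :: "nat \<Rightarrow> real"
  assumes blocks: "\<And>N. \<exists>m\<ge>N. \<exists>n. e \<le> \<bar>sum y {m..<n}\<bar>" and "0 < e"
  shows "\<exists>S. interval_family S \<and> card S = k \<and> (\<forall>K\<in>S. K \<subseteq> {N..} \<and> e \<le> \<bar>isum y K\<bar>)"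
proof (induction k arbitrary: N)
  case 0
  show ?case by (intro exI[of _ "{}"]) auto
next
  case (Suc k)
  obtain m n where "N \<le> m" and big: "e \<le> \<bar>sum y {m..<n}\<bar>" using blocks by blast
  then have "m < n" using \<open>0 < e\<close> by (cases "m < n") auto
  obtain S where S: "interval_family S" "card S = k" "\<forall>K\<in>S. K \<subseteq> {n..} \<and> e \<le> \<bar>isum y K\<bar>"
    using Suc.IH by blast
  have above: "K \<subseteq> {n..}" if "K \<in> S" for K using S(3) that by blast
  have "m \<in> {m..<n}" "m \<notin> {n..}" using \<open>m < n\<close> by auto
  then have "{m..<n} \<notin> S" using above by blast
  moreover have "disjnt {m..<n} K" "disjnt K {m..<n}" if "K \<in> S" for K
    using above[OF that] by (auto simp: disjnt_def)
  ultimately have family: "interval_family (insert {m..<n} S)" and card: "card (insert {m..<n} S) = Suc k"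
    using S nat_interval_atLeastLessThan[OF \<open>m < n\<close>] by (simp_all add: pairwise_insert)
  have "K \<subseteq> {N..}" if "K \<in> S" for K
    using above[OF that] \<open>N \<le> m\<close> \<open>m < n\<close> by auto
  moreover have "isum y {m..<n} = sum y {m..<n}" by (simp add: isum_def)
  ultimately have "\<forall>K\<in>insert {m..<n} S. K \<subseteq> {N..} \<and> e \<le> \<bar>isum y K\<bar>"
    using S(3) \<open>N \<le> m\<close> big by auto
  with family card show ?case by blast
qed

lemma James_summable:
  assumes "y \<in> James"
  shows "summable y"
proof (rule ccontr)
  assume "\<not> summable y"
  then obtain e where "0 < e" and blocks: "\<And>N. \<exists>m\<ge>N. \<exists>n. e \<le> \<bar>sum y {m..<n}\<bar>"
    unfolding summable_Cauchy by (auto simp: not_less)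
  obtain M where M: "jnorm y = ereal M" using assms James_jnormE by blast
  obtain k where k: "M\<^sup>2 < real k * e\<^sup>2" using ex_less_of_nat_mult[of "e\<^sup>2" "M\<^sup>2"] \<open>0 < e\<close> by auto
  obtain S where S: "interval_family S" "card S = k" "\<forall>K\<in>S. e \<le> \<bar>isum y K\<bar>"
    using disjoint_blocks_beyond[OF blocks \<open>0 < e\<close>, where k = k and N = 0] by auto
  have "real k * e\<^sup>2 = (\<Sum>K\<in>S. e\<^sup>2)" using S(2) by simp
  also have "\<dots> \<le> (\<Sum>K\<in>S. (isum y K)\<^sup>2)"
  proof (rule sum_mono)
    fix K assume "K \<in> S"
    then show "e\<^sup>2 \<le> (isum y K)\<^sup>2"
      using power_mono[of e "\<bar>isum y K\<bar>" 2] S(3) \<open>0 < e\<close> by simp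
  qed
  also have "\<dots> \<le> M\<^sup>2" using James_sum_squares_le[OF M S(1)] .
  finally show False using k by simp
qed

lemma James_add:
  assumes "y \<in> James" "z \<in> James"
  shows "(\<lambda>n. y n + z n) \<in> James"
proof -
  obtain My where My: "jnorm y = ereal My" using assms(1) James_jnormE by blast
  obtain Mz where Mz: "jnorm z = ereal Mz" using assms(2) James_jnormE by blast
  have "jnorm (\<lambda>n. y n + z n) \<le> ereal (My + Mz)"
  proof (rule jnorm_le)
    fix S assume S: "interval_family S"
    have "sqrt (\<Sum>K\<in>S. (isum (\<lambda>n. y n + z n) K)\<^sup>2) = L2_set (\<lambda>K. isum y K + isum z K) S"
      unfolding L2_set_def using S isum_add[OF James_summable[OF assms(1)] James_summable[OF assms(2)]]
      by simp
    also have "\<dots> \<le> L2_set (isum y) S + L2_set (isum z) S" by (rule L2_set_triangle_ineq)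
    also have "\<dots> \<le> My + Mz"
      using jnorm_ge[OF S, of y] jnorm_ge[OF S, of z] My Mz unfolding L2_set_def
      by (intro add_mono) auto
    finally show "ereal (sqrt (\<Sum>K\<in>S. (isum (\<lambda>n. y n + z n) K)\<^sup>2)) \<le> ereal (My + Mz)" by simp
  qed
  then show ?thesis by (rule James_if_jnorm_le)
qed

lemma James_scale:
  assumes "y \<in> James"
  shows "(\<lambda>n. c * y n) \<in> James"
proof -
  obtain My where My: "jnorm y = ereal My" using assms James_jnormE by blast
  have "jnorm (\<lambda>n. c * y n) \<le> ereal (\<bar>c\<bar> * My)"
  proof (rule jnorm_le)
    fix S assume S: "interval_family S"
    have "sqrt (\<Sum>K\<in>S. (isum (\<lambda>n. c * y n) K)\<^sup>2) = \<bar>c\<bar> * sqrt (\<Sum>K\<in>S. (isum y K)\<^sup>2)"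
      using S isum_scale[OF James_summable[OF assms]]
      by (simp add: power_mult_distrib sum_distrib_left[symmetric] real_sqrt_mult)
    also have "\<dots> \<le> \<bar>c\<bar> * My"
      using jnorm_ge[OF S, of y] My by (intro mult_left_mono) auto
    finally show "ereal (sqrt (\<Sum>K\<in>S. (isum (\<lambda>n. c * y n) K)\<^sup>2)) \<le> ereal (\<bar>c\<bar> * My)" by simp
  qed
  then show ?thesis by (rule James_if_jnorm_le)
qed

section \<open>Collapsing a block onto one coordinate\<close>

definition collapse :: "nat \<Rightarrow> nat \<Rightarrow> nat \<Rightarrow> (nat \<Rightarrow> real) \<Rightarrow> nat \<Rightarrow> real" where
  "collapse a b p y = (\<lambda>k. if k = p then (\<Sum>j\<in>{a..b}. y j) else if a \<le> k \<and> k \<le> b then 0 else y k)"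

definition collapse_set :: "nat \<Rightarrow> nat \<Rightarrow> nat \<Rightarrow> nat set \<Rightarrow> nat set" where
  "collapse_set a b p K = (if p \<in> K then K \<union> {a..b} else K - {a..b})"

lemma isum_collapse:
  assumes "a \<le> p" "p \<le> b"
  shows "isum (collapse a b p y) K = isum y (collapse_set a b p K)"
proof (rule isum_eventually_cong)
  let ?B = "{a..b}"
  let ?C = "collapse a b p y"
  show "finite K \<longleftrightarrow> finite (collapse_set a b p K)"
    unfolding collapse_set_def by simp
  have split: "(\<Sum>k\<in>L \<inter> {..<N}. g k) = (\<Sum>k\<in>(L - ?B) \<inter> {..<N}. g k) + (\<Sum>k\<in>L \<inter> ?B. g k)"
    if "b < N" for L N and g :: "nat \<Rightarrow> real"
  proof -
    have "L \<inter> {..<N} \<inter> ?B = L \<inter> ?B" "L \<inter> {..<N} - ?B = (L - ?B) \<inter> {..<N}" using that by auto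
    then show ?thesis using sum.Int_Diff[of "L \<inter> {..<N}" g ?B] by simp
  qed
  have outside: "(\<Sum>k\<in>(K - ?B) \<inter> {..<N}. ?C k) = (\<Sum>k\<in>(K - ?B) \<inter> {..<N}. y k)" for N
    using assms by (intro sum.cong) (auto simp: collapse_def)
  have block: "(\<Sum>k\<in>K \<inter> ?B. ?C k) = (if p \<in> K then \<Sum>k\<in>?B. y k else 0)"
  proof (cases "p \<in> K")
    case True
    then have "(\<Sum>k\<in>K \<inter> ?B. ?C k) = (\<Sum>k\<in>{p}. ?C k)"
      using assms by (intro sum.mono_neutral_right) (auto simp: collapse_def)
    then show ?thesis using True by (simp add: collapse_def)
  next
    case False
    then show ?thesis by (auto simp: collapse_def intro!: sum.neutral)
  qed
  have "collapse_set a b p K - ?B = K - ?B" "collapse_set a b p K \<inter> ?B = (if p \<in> K then ?B else {})"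
    unfolding collapse_set_def using assms by auto
  then have "(\<Sum>k\<in>K \<inter> {..<N}. ?C k) = (\<Sum>k\<in>collapse_set a b p K \<inter> {..<N}. y k)" if "b < N" for N
    using split[OF that, where L = K and g = ?C] split[OF that, where L = "collapse_set a b p K" and g = y]
      outside block
    by simp
  then show "eventually (\<lambda>N. (\<Sum>k\<in>K \<inter> {..<N}. ?C k) = (\<Sum>k\<in>collapse_set a b p K \<inter> {..<N}. y k)) sequentially"
    unfolding eventually_sequentially by (intro exI[of _ "Suc b"]) auto
qed

lemma nat_interval_collapse_set:
  assumes "a \<le> p" "p \<le> b" "nat_interval K" "collapse_set a b p K \<noteq> {}"
  shows "nat_interval (collapse_set a b p K)"
proof (cases "p \<in> K")
  case True
  have "nat_interval {a..b}" using assms(1,2) unfolding nat_interval_def by auto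
  moreover have "K \<inter> {a..b} \<noteq> {}" using True assms(1,2) by auto
  ultimately show ?thesis
    using True nat_interval_Un[OF assms(3)] unfolding collapse_set_def by simp
next
  case False
  show ?thesis
  proof (rule nat_intervalI)
    show "collapse_set a b p K \<noteq> {}" by (fact assms(4))
    fix x z w assume x: "x \<in> collapse_set a b p K" and w: "w \<in> collapse_set a b p K"
      and "x \<le> z" "z \<le> w"
    then have "z \<in> K" using nat_intervalD[OF assms(3)] False unfolding collapse_set_def by auto
    moreover have "z \<notin> {a..b}"
    proof
      assume "z \<in> {a..b}"
      then have "x \<le> p" "p \<le> w" using x w \<open>x \<le> z\<close> \<open>z \<le> w\<close> assms(1,2) False
        unfolding collapse_set_def by auto
      then have "p \<in> K" using nat_intervalD[OF assms(3)] x w False unfolding collapse_set_def by auto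
      with False show False ..
    qed
    ultimately show "z \<in> collapse_set a b p K" using False unfolding collapse_set_def by simp
  qed
qed

lemma jnorm_collapse_le:
  assumes "a \<le> p" "p \<le> b"
  shows "jnorm (collapse a b p y) \<le> jnorm y"
proof (rule jnorm_le)
  fix S assume S: "interval_family S"
  let ?\<phi> = "collapse_set a b p"
  define S' where "S' = {K \<in> S. ?\<phi> K \<noteq> {}}"
  have disj: "?\<phi> K \<inter> ?\<phi> L = {}" if "K \<in> S" "L \<in> S" "K \<noteq> L" for K L
    using S that unfolding pairwise_def disjnt_def collapse_set_def by auto
  have inj: "inj_on ?\<phi> S'"
    using disj unfolding S'_def inj_on_def by fastforce
  have family: "interval_family (?\<phi> ` S')"
    using S disj nat_interval_collapse_set[OF assms] unfolding S'_def pairwise_def disjnt_def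
    by auto
  have "(\<Sum>K\<in>S. (isum (collapse a b p y) K)\<^sup>2) = (\<Sum>K\<in>S. (isum y (?\<phi> K))\<^sup>2)"
    using isum_collapse[OF assms] by simp
  also have "\<dots> = (\<Sum>K\<in>S'. (isum y (?\<phi> K))\<^sup>2)"
    using S unfolding S'_def by (intro sum.mono_neutral_right) (auto simp: isum_def)
  also have "\<dots> = (\<Sum>K\<in>?\<phi> ` S'. (isum y K)\<^sup>2)"
    using sum.reindex[OF inj, of "\<lambda>K. (isum y K)\<^sup>2"] by simp
  finally show "ereal (sqrt (\<Sum>K\<in>S. (isum (collapse a b p y) K)\<^sup>2)) \<le> jnorm y"
    using jnorm_ge[OF family, of y] by simp
qed

lemma collapse_James: "a \<le> p \<Longrightarrow> p \<le> b \<Longrightarrow> y \<in> James \<Longrightarrow> collapse a b p y \<in> James"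
  using jnorm_collapse_le[of a p b y] unfolding James_def by auto

lemma collapse_add: "collapse a b p (\<lambda>n. y n + z n) = (\<lambda>n. collapse a b p y n + collapse a b p z n)"
  unfolding collapse_def by (auto simp: sum.distrib)

lemma collapse_scale: "collapse a b p (\<lambda>n. c * y n) = (\<lambda>n. c * collapse a b p y n)"
  unfolding collapse_def by (auto simp: sum_distrib_left)

definition delta :: "nat \<Rightarrow> real \<Rightarrow> nat \<Rightarrow> real" where
  "delta j c = (\<lambda>k. if k = j then c else 0)"

lemma jnorm_delta_le: "jnorm (delta j c) \<le> ereal \<bar>c\<bar>"
proof (rule jnorm_le)
  fix S assume S: "interval_family S"
  have isum_delta: "isum (delta j c) K = (if j \<in> K then c else 0)" for K
    using isum_finite_support[of "{j}" "delta j c" K] by (simp add: delta_def)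
  have "card {K \<in> S. j \<in> K} \<le> Suc 0"
    using S unfolding pairwise_def disjnt_def by (subst card_le_Suc0_iff_eq) auto
  have "(\<Sum>K\<in>S. (isum (delta j c) K)\<^sup>2) = (\<Sum>K\<in>S. if j \<in> K then c\<^sup>2 else 0)"
    by (intro sum.cong) (auto simp: isum_delta)
  also have "\<dots> = real (card {K \<in> S. j \<in> K}) * c\<^sup>2"
    using S sum.inter_filter[of S "\<lambda>_. c\<^sup>2" "\<lambda>K. j \<in> K"] by simp
  also have "\<dots> \<le> c\<^sup>2"
    using \<open>card {K \<in> S. j \<in> K} \<le> Suc 0\<close> by (intro mult_left_le_one_le) auto
  finally have "(\<Sum>K\<in>S. (isum (delta j c) K)\<^sup>2) \<le> c\<^sup>2" .
  then show "ereal (sqrt (\<Sum>K\<in>S. (isum (delta j c) K)\<^sup>2)) \<le> ereal \<bar>c\<bar>"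
    using real_sqrt_le_mono by fastforce
qed

lemma delta_James: "delta j c \<in> James"
  using jnorm_delta_le by (rule James_if_jnorm_le)

section \<open>Extreme points\<close>

lemma not_extreme_ptI:
  assumes "y \<in> B" "z \<in> B" "0 < t" "t < 1" "x = (\<lambda>n. t * y n + (1 - t) * z n)" "y \<noteq> z"
  shows "\<not> extreme_pt B x"
  using assms unfolding extreme_pt_def by blast

lemma divide_add_in_unit_interval:
  fixes a b :: real
  assumes "0 < a * b"
  shows "0 < a / (a + b)" "a / (a + b) < 1"
  using assms by (auto simp: zero_less_mult_iff field_simps)

lemma zero_not_extreme_ball_J: "\<not> extreme_pt ball_J (\<lambda>_. 0)"
proof (rule not_extreme_ptI)
  show "delta 0 1 \<in> ball_J" "delta 0 (-1) \<in> ball_J"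
    using jnorm_delta_le[of 0 1] jnorm_delta_le[of 0 "-1"] by (auto simp: ball_J_def one_ereal_def)
  show "(\<lambda>_. 0) = (\<lambda>n. 1/2 * delta 0 1 n + (1 - 1/2) * delta 0 (-1) n)"
    by (auto simp: delta_def)
  show "delta 0 1 \<noteq> delta 0 (-1)" by (auto simp: delta_def fun_eq_iff)
qed simp_all

lemma extreme_ball_J_sign_change:
  assumes ext: "extreme_pt ball_J x" and "n < m" and between: "\<And>k. n < k \<Longrightarrow> k < m \<Longrightarrow> x k = 0"
  shows "x n * x m \<le> 0"
proof (rule ccontr)
  assume "\<not> x n * x m \<le> 0"
  then have pos: "0 < x n * x m" by simp
  have sum_block: "(\<Sum>j\<in>{n..m}. x j) = x n + x m"
  proof -
    have "(\<Sum>j\<in>{n..m}. x j) = (\<Sum>j\<in>{n, m}. x j)"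
      using \<open>n < m\<close> between by (intro sum.mono_neutral_right) auto
    then show ?thesis using \<open>n < m\<close> by simp
  qed
  have "x n + x m \<noteq> 0" using pos by (auto simp: zero_less_mult_iff)
  define t where "t = x n / (x n + x m)"
  have "\<not> extreme_pt ball_J x"
  proof (rule not_extreme_ptI)
    show "collapse n m n x \<in> ball_J" "collapse n m m x \<in> ball_J"
      using jnorm_collapse_le[of n n m x] jnorm_collapse_le[of n m m x] \<open>n < m\<close> ext
      by (auto simp: ball_J_def extreme_pt_def)
    show "0 < t" "t < 1" using divide_add_in_unit_interval[OF pos] by (simp_all add: t_def)
    have weight_n: "t * (x n + x m) = x n" using \<open>x n + x m \<noteq> 0\<close> by (simp add: t_def)
    then have weight_m: "(1 - t) * (x n + x m) = x m" by (simp add: algebra_simps)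
    have elsewhere: "collapse n m n x k = x k \<and> collapse n m m x k = x k" if "k \<noteq> n" "k \<noteq> m" for k
      using between that by (auto simp: collapse_def)
    show "x = (\<lambda>k. t * collapse n m n x k + (1 - t) * collapse n m m x k)"
    proof
      fix k
      show "x k = t * collapse n m n x k + (1 - t) * collapse n m m x k"
        using \<open>n < m\<close> weight_n weight_m elsewhere[of k]
        by (cases "k = n"; cases "k = m") (auto simp: collapse_def sum_block algebra_simps)
    qed
    show "collapse n m n x \<noteq> collapse n m m x"
      using \<open>n < m\<close> \<open>x n + x m \<noteq> 0\<close> by (auto simp: fun_eq_iff collapse_def sum_block)
  qed
  with ext show False by simp
qed

lemma ball_Jdual_compose_collapse:
  assumes f: "f \<in> ball_Jdual" and "a \<le> p" "p \<le> b"
  shows "(\<lambda>y. if y \<in> James then f (collapse a b p y) else 0) \<in> ball_Jdual"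
proof -
  have C: "\<And>y. y \<in> James \<Longrightarrow> collapse a b p y \<in> James" using collapse_James assms(2,3) by blast
  have "f (collapse a b p (\<lambda>n. y n + z n)) = f (collapse a b p y) + f (collapse a b p z)"
    if "y \<in> James" "z \<in> James" for y z
    using f C[OF that(1)] C[OF that(2)] unfolding ball_Jdual_def collapse_add by blast
  moreover have "f (collapse a b p (\<lambda>n. c * y n)) = c * f (collapse a b p y)" if "y \<in> James" for c y
    using f C[OF that] unfolding ball_Jdual_def collapse_scale by blast
  moreover have "ereal \<bar>f (collapse a b p y)\<bar> \<le> jnorm y" if "y \<in> James" for y
    using f C[OF that] jnorm_collapse_le[OF assms(2,3), of y] unfolding ball_Jdual_def
    by (blast intro: order_trans)
  ultimately show ?thesis by (simp add: ball_Jdual_def James_add James_scale)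
qed

(* Additivity comes from membership in the dual ball: for infinite F the series defining the
   functional is not known to converge, so it cannot be split termwise. *)
lemma interval_functional_collapse:
  assumes f: "interval_functional F \<alpha> I \<in> ball_Jdual"
    and FU: "finite F \<or> F = UNIV" and "r \<in> F" and ab: "a \<le> p" "p \<le> b"
    and block: "\<And>k. k \<in> F \<Longrightarrow> \<alpha> k \<noteq> 0 \<Longrightarrow> I k \<inter> {a..b} = (if k = r then {p} else {})"
    and y: "y \<in> James"
  shows "interval_functional F \<alpha> I (collapse a b p y)
          = interval_functional F \<alpha> I y + \<alpha> r * ((\<Sum>j\<in>{a..b}. y j) - y p)"
proof -
  let ?f = "interval_functional F \<alpha> I"
  let ?c = "(\<Sum>j\<in>{a..b}. y j) - y p"
  define w where "w = (\<lambda>k. collapse a b p y k + (-1) * y k)"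
  have w: "w \<in> James" unfolding w_def using James_add[OF collapse_James[OF ab y] James_scale[OF y]] .
  have "w k = 0" if "k \<notin> {a..b}" for k using that ab unfolding w_def collapse_def by auto
  then have "isum w K = (\<Sum>j\<in>K \<inter> {a..b}. w j)" for K by (intro isum_finite_support) auto
  moreover have "w p = ?c" using ab unfolding w_def collapse_def by simp
  ultimately have terms: "\<alpha> k * isum w (I k) = (if k = r then \<alpha> r * ?c else 0)" if "k \<in> F" for k
    using block[OF that] by (cases "\<alpha> k = 0") auto
  have "?f w = \<alpha> r * ?c"
  proof (cases "finite F")
    case True
    then show ?thesis using w terms \<open>r \<in> F\<close> by (simp add: interval_functional_def)
  next
    case False
    then have "F = UNIV" using FU by simp
    then show ?thesis
      using w terms False sums_single[of r "\<lambda>_. \<alpha> r * ?c"] by (simp add: interval_functional_def sums_iff)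
  qed
  moreover have "collapse a b p y = (\<lambda>k. y k + w k)" unfolding w_def by auto
  ultimately show ?thesis using f y w unfolding ball_Jdual_def by simp
qed

lemma not_extreme_ball_Jdual_shifts:
  assumes "f \<in> ball_Jdual" "f1 \<in> ball_Jdual" "f2 \<in> ball_Jdual"
    and f1: "\<And>y. y \<in> James \<Longrightarrow> f1 y = f y + c1 * G y"
    and f2: "\<And>y. y \<in> James \<Longrightarrow> f2 y = f y + c2 * G y"
    and "c1 * c2 < 0" "y0 \<in> James" "G y0 \<noteq> 0"
  shows "\<not> extreme_pt ball_Jdual f"
proof (rule not_extreme_ptI)
  define t where "t = c2 / (c2 + - c1)"
  have "0 < c2 * - c1" using \<open>c1 * c2 < 0\<close> by (simp add: mult.commute)
  then show "0 < t" "t < 1" unfolding t_def by (rule divide_add_in_unit_interval)+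
  have "c1 \<noteq> c2" using \<open>c1 * c2 < 0\<close> by auto
  then have "t * c1 + (1 - t) * c2 = 0" unfolding t_def by (simp add: field_simps)
  show "f = (\<lambda>y. t * f1 y + (1 - t) * f2 y)"
  proof
    fix y
    show "f y = t * f1 y + (1 - t) * f2 y"
    proof (cases "y \<in> James")
      case True
      have "t * f1 y + (1 - t) * f2 y = f y + (t * c1 + (1 - t) * c2) * G y"
        using f1[OF True] f2[OF True] by (simp add: algebra_simps)
      then show ?thesis using \<open>t * c1 + (1 - t) * c2 = 0\<close> by simp
    next
      case False
      then show ?thesis using assms(1-3) unfolding ball_Jdual_def by simp
    qed
  qed
  show "f1 \<noteq> f2" using f1[OF \<open>y0 \<in> James\<close>] f2[OF \<open>y0 \<in> James\<close>] \<open>c1 \<noteq> c2\<close> \<open>G y0 \<noteq> 0\<close> by auto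
qed (use assms in auto)

lemma interval_functional_not_extreme_at_gap:
  assumes FU: "finite F \<or> F = UNIV" and "n \<in> F" "m \<in> F" and opposite: "\<alpha> n * \<alpha> m < 0"
    and "Suc P < Q"
    and gap: "\<And>k. k \<in> F \<Longrightarrow> \<alpha> k \<noteq> 0 \<Longrightarrow>
      I k \<inter> {P..Q} = (if k = n then {P} else if k = m then {Q} else {})"
  shows "\<not> extreme_pt ball_Jdual (interval_functional F \<alpha> I)"
proof
  assume ext: "extreme_pt ball_Jdual (interval_functional F \<alpha> I)"
  let ?f = "interval_functional F \<alpha> I"
  define G where "G y = (\<Sum>j\<in>{Suc P..Q - 1}. y j)" for y :: "nat \<Rightarrow> real"
  have f: "?f \<in> ball_Jdual" using ext unfolding extreme_pt_def by blast
  have "n \<noteq> m" using opposite by (auto simp: mult_less_0_iff)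
  have block_n: "I k \<inter> {P..Q - 1} = (if k = n then {P} else {})" if "k \<in> F" "\<alpha> k \<noteq> 0" for k
  proof -
    have "I k \<inter> {P..Q - 1} = I k \<inter> {P..Q} \<inter> {P..Q - 1}" by auto
    then show ?thesis using gap[OF that] \<open>Suc P < Q\<close> \<open>n \<noteq> m\<close> by simp
  qed
  have block_m: "I k \<inter> {Suc P..Q} = (if k = m then {Q} else {})" if "k \<in> F" "\<alpha> k \<noteq> 0" for k
  proof -
    have "I k \<inter> {Suc P..Q} = I k \<inter> {P..Q} \<inter> {Suc P..Q}" by auto
    then show ?thesis using gap[OF that] \<open>Suc P < Q\<close> \<open>n \<noteq> m\<close> by simp
  qed
  have "P \<le> Q - 1" "Suc P \<le> Q" using \<open>Suc P < Q\<close> by auto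
  have "\<not> extreme_pt ball_Jdual ?f"
  proof (rule not_extreme_ball_Jdual_shifts[OF f])
    show "(\<lambda>y. if y \<in> James then ?f (collapse P (Q - 1) P y) else 0) \<in> ball_Jdual"
      "(\<lambda>y. if y \<in> James then ?f (collapse (Suc P) Q Q y) else 0) \<in> ball_Jdual"
      using ball_Jdual_compose_collapse[OF f] \<open>P \<le> Q - 1\<close> \<open>Suc P \<le> Q\<close> by auto
    show "(if y \<in> James then ?f (collapse P (Q - 1) P y) else 0) = ?f y + \<alpha> n * G y"
      if "y \<in> James" for y
      using interval_functional_collapse[OF f FU \<open>n \<in> F\<close> order_refl \<open>P \<le> Q - 1\<close> block_n that]
        sum.atLeast_Suc_atMost[OF \<open>P \<le> Q - 1\<close>, of y] that by (simp add: G_def)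
    show "(if y \<in> James then ?f (collapse (Suc P) Q Q y) else 0) = ?f y + \<alpha> m * G y"
      if "y \<in> James" for y
      using interval_functional_collapse[OF f FU \<open>m \<in> F\<close> \<open>Suc P \<le> Q\<close> order_refl block_m that]
        sum.nat_ivl_Suc'[of "Suc P" "Q - 1" y] \<open>Suc P < Q\<close> that by (simp add: G_def)
    show "G (delta (Suc P) 1) \<noteq> 0" using \<open>Suc P < Q\<close> by (simp add: G_def delta_def)
  qed (use opposite delta_James in auto)
  with ext show False by simp
qed

section \<open>A hole in the union of the intervals\<close>

lemma ordered_intervals_less:
  fixes I :: "nat \<Rightarrow> nat set"
  assumes ord: "\<forall>n. n \<in> F \<and> Suc n \<in> F \<longrightarrow> (\<forall>a\<in>I n. \<forall>b\<in>I (Suc n). a < b)"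
    and nonempty: "\<And>n. n \<in> F \<Longrightarrow> I n \<noteq> {}"
    and down: "\<And>i j. j \<in> F \<Longrightarrow> i \<le> j \<Longrightarrow> i \<in> F"
    and "i < j" "j \<in> F" "a \<in> I i" "c \<in> I j"
  shows "a < c"
  using assms(4-7)
proof (induction j arbitrary: c)
  case 0
  then show ?case by simp
next
  case (Suc j)
  have "j \<in> F" using down[OF Suc.prems(2)] by simp
  show ?case
  proof (cases "i = j")
    case True
    then show ?thesis using ord \<open>j \<in> F\<close> Suc.prems by blast
  next
    case False
    obtain b where "b \<in> I j" using nonempty[OF \<open>j \<in> F\<close>] by blast
    then have "a < b" using Suc.IH[OF _ \<open>j \<in> F\<close> Suc.prems(3)] Suc.prems(1) False by simp
    moreover have "b < c" using ord \<open>j \<in> F\<close> Suc.prems(2,4) \<open>b \<in> I j\<close> by blast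
    ultimately show ?thesis by simp
  qed
qed

lemma consecutive_around_hole:
  fixes S :: "nat set" and I :: "nat \<Rightarrow> nat set"
  assumes intv: "\<And>k. k \<in> S \<Longrightarrow> nat_interval (I k)"
    and ord: "\<And>i j a c. i \<in> S \<Longrightarrow> j \<in> S \<Longrightarrow> i < j \<Longrightarrow> a \<in> I i \<Longrightarrow> c \<in> I j \<Longrightarrow> a < c"
    and "i \<in> S" "a \<in> I i" "j \<in> S" "c \<in> I j" "a < b" "b < c"
    and hole: "\<And>k. k \<in> S \<Longrightarrow> b \<notin> I k"
  obtains n m where "n \<in> S" "m \<in> S" "n < m" "\<And>k. k \<in> S \<Longrightarrow> n < k \<Longrightarrow> k < m \<Longrightarrow> False"
    "\<And>e. e \<in> I n \<Longrightarrow> e < b" "\<And>e. e \<in> I m \<Longrightarrow> b < e"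
proof -
  define L where "L = {k \<in> S. \<exists>e\<in>I k. e < b}"
  have below: "e < b" if "k \<in> L" "e \<in> I k" for k e
    using that nat_interval_side[OF intv hole] unfolding L_def by blast
  have "k < j" if "k \<in> L" for k
  proof (rule ccontr)
    obtain e where "e \<in> I k" "k \<in> S" using \<open>k \<in> L\<close> unfolding L_def by blast
    assume "\<not> k < j"
    have "c < b"
    proof (cases "k = j")
      case True
      then show ?thesis using below[OF that] \<open>c \<in> I j\<close> by simp
    next
      case False
      then have "c < e" using ord[OF \<open>j \<in> S\<close> \<open>k \<in> S\<close> _ \<open>c \<in> I j\<close> \<open>e \<in> I k\<close>] \<open>\<not> k < j\<close> by simp
      then show ?thesis using below[OF that \<open>e \<in> I k\<close>] by simp
    qed
    then show False using \<open>b < c\<close> by simp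
  qed
  then have "finite L" by (meson finite_lessThan finite_subset lessThan_iff subsetI)
  have "i \<in> L" unfolding L_def using assms(3,4,7) by blast
  define n where "n = Max L"
  have "n \<in> L" unfolding n_def using \<open>finite L\<close> \<open>i \<in> L\<close> Max_in by blast
  then have "n < j" using \<open>\<And>k. k \<in> L \<Longrightarrow> k < j\<close> by blast
  define m where "m = (LEAST k. k \<in> S \<and> n < k)"
  have m: "m \<in> S \<and> n < m"
    unfolding m_def using LeastI[of "\<lambda>k. k \<in> S \<and> n < k" j] \<open>j \<in> S\<close> \<open>n < j\<close> by blast
  have "\<not> (k \<in> S \<and> n < k \<and> k < m)" for k unfolding m_def using not_less_Least by blast
  moreover have "m \<notin> L" using Max_ge[OF \<open>finite L\<close>] m unfolding n_def by fastforce
  then have "b < e" if "e \<in> I m" for e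
  proof -
    have "\<not> e < b" "e \<noteq> b" using \<open>m \<notin> L\<close> that m hole[of m] unfolding L_def by auto
    then show ?thesis by simp
  qed
  ultimately show ?thesis
    using that \<open>n \<in> L\<close> m below unfolding L_def by blast
qed

lemma support_gap:
  fixes S :: "nat set" and I :: "nat \<Rightarrow> nat set"
  assumes intv: "\<And>k. k \<in> S \<Longrightarrow> nat_interval (I k)"
    and ord: "\<And>i j a c. i \<in> S \<Longrightarrow> j \<in> S \<Longrightarrow> i < j \<Longrightarrow> a \<in> I i \<Longrightarrow> c \<in> I j \<Longrightarrow> a < c"
    and "S \<noteq> {}" and notint: "\<not> nat_interval (\<Union>k\<in>S. I k)"
  obtains n m P Q where "n \<in> S" "m \<in> S" "n < m" "\<And>k. k \<in> S \<Longrightarrow> n < k \<Longrightarrow> k < m \<Longrightarrow> False"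
    "Suc P < Q" "\<And>k. k \<in> S \<Longrightarrow> I k \<inter> {P..Q} = (if k = n then {P} else if k = m then {Q} else {})"
proof -
  have nonempty: "I k \<noteq> {}" if "k \<in> S" for k using intv[OF that] unfolding nat_interval_def by blast
  then have "(\<Union>k\<in>S. I k) \<noteq> {}" using \<open>S \<noteq> {}\<close> by blast
  then obtain a b c where "a \<in> (\<Union>k\<in>S. I k)" "c \<in> (\<Union>k\<in>S. I k)" "a \<le> b" "b \<le> c"
    and "b \<notin> (\<Union>k\<in>S. I k)"
    using notint unfolding nat_interval_def by meson
  then obtain i j where "i \<in> S" "a \<in> I i" "j \<in> S" "c \<in> I j" and hole: "\<And>k. k \<in> S \<Longrightarrow> b \<notin> I k"
    by blast
  then have "a < b" "b < c" using \<open>a \<le> b\<close> \<open>b \<le> c\<close> le_neq_implies_less by blast+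
  obtain n m where nm: "n \<in> S" "m \<in> S" "n < m" "\<And>k. k \<in> S \<Longrightarrow> n < k \<Longrightarrow> k < m \<Longrightarrow> False"
    and below: "\<And>e. e \<in> I n \<Longrightarrow> e < b" and above: "\<And>e. e \<in> I m \<Longrightarrow> b < e"
    using consecutive_around_hole[of S I i a j c b] intv ord \<open>i \<in> S\<close> \<open>a \<in> I i\<close> \<open>j \<in> S\<close> \<open>c \<in> I j\<close>
      \<open>a < b\<close> \<open>b < c\<close> hole
    by blast
  define P where "P = Max (I n)"
  define Q where "Q = (LEAST e. e \<in> I m)"
  have "finite (I n)" using below by (meson finite_lessThan finite_subset lessThan_iff subsetI)
  then have P: "P \<in> I n" "\<And>e. e \<in> I n \<Longrightarrow> e \<le> P"
    unfolding P_def using nonempty[OF \<open>n \<in> S\<close>] by simp_all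
  have Q: "Q \<in> I m" "\<And>e. e \<in> I m \<Longrightarrow> Q \<le> e"
    unfolding Q_def using nonempty[OF \<open>m \<in> S\<close>] by (auto intro: LeastI Least_le)
  have "P < b" "b < Q" using below[OF P(1)] above[OF Q(1)] .
  then have "Suc P < Q" by simp
  have "I k \<inter> {P..Q} = (if k = n then {P} else if k = m then {Q} else {})" if kS: "k \<in> S" for k
  proof -
    consider "k < n" | "k = n" | "k = m" | "m < k"
      using nm(4)[OF kS] linorder_neqE_nat by metis
    then show ?thesis
    proof cases
      case 1
      have "e < P" if "e \<in> I k" for e using ord[OF \<open>k \<in> S\<close> \<open>n \<in> S\<close> 1 that P(1)] .
      then show ?thesis using 1 \<open>n < m\<close> by fastforce
    next
      case 2
      then show ?thesis using P \<open>P < b\<close> \<open>b < Q\<close> by fastforce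
    next
      case 3
      then show ?thesis using Q \<open>P < b\<close> \<open>b < Q\<close> \<open>n < m\<close> by fastforce
    next
      case 4
      have "Q < e" if "e \<in> I k" for e using ord[OF \<open>m \<in> S\<close> \<open>k \<in> S\<close> 4 Q(1) that] .
      then show ?thesis using 4 \<open>n < m\<close> by fastforce
    qed
  qed
  with nm \<open>Suc P < Q\<close> show ?thesis using that by blast
qed

theorem proposition5p4:
  fixes F :: "nat set" and \<alpha> :: "nat \<Rightarrow> real" and I :: "nat \<Rightarrow> nat set"
    and x :: "nat \<Rightarrow> real"
  assumes F: "(\<exists>k. F = {..<k}) \<or> F = UNIV"
    and x_def: "x = (\<lambda>n. if n \<in> F then \<alpha> n else 0)"
    and ext: "extreme_pt ball_J x"
    and intv: "\<forall>n\<in>F. nat_interval (I n)"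
    and ord: "\<forall>n. n \<in> F \<and> Suc n \<in> F \<longrightarrow> (\<forall>a\<in>I n. \<forall>b\<in>I (Suc n). a < b)"
    and notint: "\<not> nat_interval (\<Union>n\<in>supp x. I n)"
  shows "\<not> extreme_pt ball_Jdual (interval_functional F \<alpha> I)"
proof -
  have supp_iff: "k \<in> supp x \<longleftrightarrow> k \<in> F \<and> \<alpha> k \<noteq> 0" for k by (simp add: x_def supp_def)
  have "supp x \<noteq> {}"
  proof
    assume "supp x = {}"
    then have "x = (\<lambda>_. 0)" by (auto simp: supp_def)
    with ext zero_not_extreme_ball_J show False by simp
  qed
  have "a < c" if "i \<in> supp x" "j \<in> supp x" "i < j" "a \<in> I i" "c \<in> I j" for i j a c
  proof (rule ordered_intervals_less[of F I])
    show "I k \<noteq> {}" if "k \<in> F" for k using intv that unfolding nat_interval_def by blast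
    show "i \<in> F" if "j \<in> F" "i \<le> j" for i j using F that by auto
  qed (use ord that supp_iff in auto)
  then obtain n m P Q where "n \<in> supp x" "m \<in> supp x" "n < m"
    and consecutive: "\<And>k. k \<in> supp x \<Longrightarrow> n < k \<Longrightarrow> k < m \<Longrightarrow> False"
    and "Suc P < Q" and gap: "\<And>k. k \<in> supp x \<Longrightarrow>
      I k \<inter> {P..Q} = (if k = n then {P} else if k = m then {Q} else {})"
    using support_gap[of "supp x" I] intv supp_iff \<open>supp x \<noteq> {}\<close> notint by blast
  have "x n * x m \<le> 0"
    using extreme_ball_J_sign_change[OF ext \<open>n < m\<close>] consecutive unfolding supp_def by blast
  then have "\<alpha> n * \<alpha> m < 0"
    using \<open>n \<in> supp x\<close> \<open>m \<in> supp x\<close> supp_iff x_def by (simp add: less_le)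
  then show ?thesis
    using interval_functional_not_extreme_at_gap[of F n m \<alpha> P Q I] F \<open>Suc P < Q\<close> gap supp_iff
      \<open>n \<in> supp x\<close> \<open>m \<in> supp x\<close> by auto
qed

end
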